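(* Let $n\ge1$. (1) Let $X$ be an interval in $\mathcal{K}$ with at least two elements (with the subspace topology). A map $f:X\to X$ has closed graph if and only if there is an integer $\lambda$ with $2\lambda\in X$ such that $f$ is the constant map with value $2\lambda$. (2) A map $f:\mathcal{K}^n\to\mathcal{K}^n$ has closed graph if and only if there are integers $\lambda_1,\ldots,\lambda_n$ such that $f$ is the constant map with value $(2\lambda_1,\ldots,2\lambda_n)$. (3) A map $f:A(\mathcal{K}^n)\to A(\mathcal{K}^n)$ has closed graph if and only if either there are integers $\lambda_1,\ldots,\lambda_n$ such that $f$ is the constant map with value $(2\lambda_1,\ldots,2\lambda_n)$, or $f$ is the constant map with value $\infty$. In particular (cases $n=1,2$ of (3)), every self-map with closed graph on the Khalimsky circle $A(\mathcal{K})$ or on the Khalimsky sphere $A(\mathcal{K}^2)$ is constant.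
   Context: The Khalimsky line $\mathcal{K}$ is $\mathbb{Z}$ equipped with the topology generated by the basis $\{\{2m-1,2m,2m+1\}:m\in\mathbb{Z}\}\cup\{\{2m+1\}:m\in\mathbb{Z}\}$; $\mathcal{K}^n$ is its $n$-fold product with the product topology. An interval in $\mathcal{K}$ is one of: $\varnothing$, $\mathcal{K}$, $\{x\in\mathbb{Z}:a\le x\le b\}$ for integers $a\le b$, $\{x\in\mathbb{Z}:x\ge a\}$ or $\{x\in\mathbb{Z}:x\le a\}$ for an integer $a$. For a topological space $Y$ and a point $\infty\notin Y$, the one-point (Alexandroff) compactification $A(Y)=Y\cup\{\infty\}$ has topology $\{U: U\text{ open in }Y\}\cup\{U\subseteq A(Y):\infty\in U,\ Y\setminus U\text{ is a compact closed subset of }Y\}$. $A(\mathcal{K})$ is called the Khalimsky circle and $A(\mathcal{K}^2)$ the Khalimsky sphere. A map $f:X\to X$ has closed graph if $G_f=\{(x,f(x)):x\in X\}$ is closed in $X\times X$ (product topology); $f$ is not assumed continuous. *)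

theory Defs
  imports "HOL-Analysis.Analysis"
begin

definition khalimsky :: "int topology" where
  "khalimsky = topology_generated_by
     ({{2*m - 1, 2*m, 2*m + 1} | m. True} \<union> {{2*m + 1} | m. True})"

definition khalimsky_interval :: "int set \<Rightarrow> bool" where
  "khalimsky_interval S \<longleftrightarrow>
     S = {} \<or> S = UNIV \<or> (\<exists>a b. a \<le> b \<and> S = {a..b}) \<or>
     (\<exists>a. S = {a..}) \<or> (\<exists>a. S = {..a})"

text \<open>The n-fold product K^n; points are functions nat => int, extensional
  outside the index set {..<n}.\<close>
definition khalimsky_power :: "nat \<Rightarrow> (nat \<Rightarrow> int) topology" where
  "khalimsky_power n = product_topology (\<lambda>_. khalimsky) {..<n}"

text \<open>One-point (Alexandroff) compactification; the point at infinity is None,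
  and y in Y is represented by Some y.\<close>
definition alexandroff :: "'a topology \<Rightarrow> 'a option topology" where
  "alexandroff Y = topology (\<lambda>U.
      (\<exists>V. openin Y V \<and> U = Some ` V) \<or>
      (None \<in> U \<and> U \<subseteq> insert None (Some ` topspace Y) \<and>
       compactin Y {y \<in> topspace Y. Some y \<notin> U} \<and>
       closedin Y {y \<in> topspace Y. Some y \<notin> U}))"

definition closed_graph :: "'a topology \<Rightarrow> ('a \<Rightarrow> 'a) \<Rightarrow> bool" where
  "closed_graph X f \<longleftrightarrow>
     closedin (prod_topology X X) {(x, f x) | x. x \<in> topspace X}"

end

theory Submission
  imports Defs
begin

(*
  A self-map f with closed graph has closed fibres, and each of its values is a closed point.
  Every point x of a Khalimsky space has a smallest open neighbourhood; any y in it lies in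
  every neighbourhood of x, so x is in the closure of the fibre of f y and f x = f y.  Thus f
  is locally constant, hence constant on these connected spaces, and its value is a closed
  point, i.e. has even coordinates.  On A(K^n) the same argument makes f constant on the
  copy of K^n, which is dense because K^n is not compact; closedness of the fibre then
  extends the constant value to the point at infinity.
*)

lemma closedin_closed_graph_fibre:
  assumes "closed_graph X f" "q \<in> topspace X"
  shows "closedin X {x \<in> topspace X. f x = q}"
proof -
  have "continuous_map X (prod_topology X X) (\<lambda>x. (x, q))"
    using assms(2) by (intro continuous_map_pairedI) auto
  from closedin_continuous_map_preimage[OF this assms(1)[unfolded closed_graph_def]]
  have "closedin X {x \<in> topspace X. (x, q) \<in> {(x, f x) |x. x \<in> topspace X}}" .
  moreover have "{x \<in> topspace X. (x, q) \<in> {(x, f x) |x. x \<in> topspace X}} = {x \<in> topspace X. f x = q}"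
    by auto
  ultimately show ?thesis by simp
qed

lemma closedin_closed_graph_value:
  assumes "closed_graph X f" "f ` topspace X \<subseteq> topspace X" "p \<in> topspace X"
  shows "closedin X {f p}"
proof -
  have "continuous_map X (prod_topology X X) (\<lambda>y. (p, y))"
    using assms(3) by (intro continuous_map_pairedI) auto
  from closedin_continuous_map_preimage[OF this assms(1)[unfolded closed_graph_def]]
  have "closedin X {y \<in> topspace X. (p, y) \<in> {(x, f x) |x. x \<in> topspace X}}" .
  moreover have "{y \<in> topspace X. (p, y) \<in> {(x, f x) |x. x \<in> topspace X}} = {f p}"
    using assms(2,3) by auto
  ultimately show ?thesis by simp
qed

lemma closed_graph_const:
  assumes "closedin X {c}" "\<And>x. x \<in> topspace X \<Longrightarrow> f x = c"
  shows "closed_graph X f"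
proof -
  have "{(x, f x) | x. x \<in> topspace X} = topspace X \<times> {c}" using assms(2) by auto
  then show ?thesis
    unfolding closed_graph_def using assms(1) by (simp add: closedin_prod_Times_iff)
qed

lemma closed_graph_eq_if_in_every_nhd:
  assumes "closed_graph X f" "f ` topspace X \<subseteq> topspace X" "x \<in> topspace X" "y \<in> topspace X"
    and "\<And>U. openin X U \<Longrightarrow> x \<in> U \<Longrightarrow> y \<in> U"
  shows "f y = f x"
proof (rule ccontr)
  let ?F = "{z \<in> topspace X. f z = f y}"
  assume "f y \<noteq> f x"
  have "openin X (topspace X - ?F)"
    using closedin_closed_graph_fibre[OF assms(1), of "f y"] assms(2,4) by blast
  moreover have "x \<in> topspace X - ?F"
    using assms(3) \<open>f y \<noteq> f x\<close> by simp
  ultimately have "y \<in> topspace X - ?F"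
    by (rule assms(5))
  then show False by simp
qed

lemma connected_space_locally_constant:
  assumes "connected_space X"
    and loc: "\<And>x. x \<in> topspace X \<Longrightarrow> \<exists>U. openin X U \<and> x \<in> U \<and> (\<forall>y\<in>U. g y = g x)"
    and "x \<in> topspace X" "y \<in> topspace X"
  shows "g x = g y"
proof -
  have openin_pred: "openin X {z \<in> topspace X. P (g z)}" for P
  proof (subst openin_subopen, intro ballI)
    fix z assume z: "z \<in> {z \<in> topspace X. P (g z)}"
    then obtain U where U: "openin X U" "z \<in> U" "\<forall>y\<in>U. g y = g z"
      using loc by blast
    have "U \<subseteq> {z \<in> topspace X. P (g z)}"
    proof
      fix y assume "y \<in> U"
      then have "g y = g z" "y \<in> topspace X"
        using U openin_subset by blast+
      with z show "y \<in> {z \<in> topspace X. P (g z)}" by simp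
    qed
    with U show "\<exists>T. openin X T \<and> z \<in> T \<and> T \<subseteq> {z \<in> topspace X. P (g z)}"
      by blast
  qed
  have "topspace X - {z \<in> topspace X. g z = g x} = {z \<in> topspace X. g z \<noteq> g x}" by blast
  then have "closedin X {z \<in> topspace X. g z = g x}"
    unfolding closedin_def using openin_pred[of "\<lambda>v. v \<noteq> g x"] by auto
  moreover have "openin X {z \<in> topspace X. g z = g x}"
    using openin_pred[of "\<lambda>v. v = g x"] .
  ultimately have "{z \<in> topspace X. g z = g x} = topspace X"
    using assms(1,3) unfolding connected_space_clopen_in by blast
  with assms(4) have "y \<in> {z \<in> topspace X. g z = g x}" by simp
  then show ?thesis by simp
qed

definition alexandrov_discrete :: "'a topology \<Rightarrow> bool" where
  "alexandrov_discrete X \<longleftrightarrow>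
     (\<forall>x\<in>topspace X. \<exists>N. openin X N \<and> x \<in> N \<and> (\<forall>U. openin X U \<and> x \<in> U \<longrightarrow> N \<subseteq> U))"

lemma alexandrov_discrete_subtopology:
  assumes "alexandrov_discrete X"
  shows "alexandrov_discrete (subtopology X S)"
  unfolding alexandrov_discrete_def
proof
  fix x assume x: "x \<in> topspace (subtopology X S)"
  then have "x \<in> topspace X" "x \<in> S" by auto
  then obtain N where N: "openin X N" "x \<in> N" "\<And>U. openin X U \<Longrightarrow> x \<in> U \<Longrightarrow> N \<subseteq> U"
    using assms unfolding alexandrov_discrete_def by meson
  have "openin (subtopology X S) (N \<inter> S)"
    using N(1) unfolding openin_subtopology by blast
  moreover have "N \<inter> S \<subseteq> U" if U: "openin (subtopology X S) U" "x \<in> U" for U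
  proof -
    obtain T where "openin X T" "U = T \<inter> S"
      using U(1) by (meson openin_subtopology)
    with U(2) N(3)[of T] show ?thesis by blast
  qed
  ultimately show "\<exists>M. openin (subtopology X S) M \<and> x \<in> M \<and>
          (\<forall>U. openin (subtopology X S) U \<and> x \<in> U \<longrightarrow> M \<subseteq> U)"
    using N(2) \<open>x \<in> S\<close> by blast
qed

lemma alexandrov_discrete_product_topology:
  assumes "finite I" "\<And>i. i \<in> I \<Longrightarrow> alexandrov_discrete (X i)"
  shows "alexandrov_discrete (product_topology X I)"
  unfolding alexandrov_discrete_def
proof
  fix x assume x: "x \<in> topspace (product_topology X I)"
  then have "\<forall>i\<in>I. \<exists>N. openin (X i) N \<and> x i \<in> N \<and> (\<forall>U. openin (X i) U \<and> x i \<in> U \<longrightarrow> N \<subseteq> U)"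
    using assms(2) unfolding alexandrov_discrete_def by auto
  then obtain N where N: "\<And>i. i \<in> I \<Longrightarrow> openin (X i) (N i)" "\<And>i. i \<in> I \<Longrightarrow> x i \<in> N i"
    "\<And>i U. i \<in> I \<Longrightarrow> openin (X i) U \<Longrightarrow> x i \<in> U \<Longrightarrow> N i \<subseteq> U"
    by metis
  have "openin (product_topology X I) (PiE I N)"
    using assms(1) N(1) by (simp add: openin_PiE_gen)
  moreover have "x \<in> PiE I N"
    using x N(2) by (simp add: PiE_iff)
  moreover have "PiE I N \<subseteq> U" if U: "openin (product_topology X I) U" "x \<in> U" for U
  proof -
    obtain V where "\<forall>i\<in>I. openin (X i) (V i)" "x \<in> PiE I V" "PiE I V \<subseteq> U"
      using U unfolding openin_product_topology_alt by blast
    then have "PiE I N \<subseteq> PiE I V"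
      using N(3) by (intro PiE_mono) (simp add: PiE_iff)
    with \<open>PiE I V \<subseteq> U\<close> show ?thesis by blast
  qed
  ultimately show "\<exists>M. openin (product_topology X I) M \<and> x \<in> M \<and>
          (\<forall>U. openin (product_topology X I) U \<and> x \<in> U \<longrightarrow> M \<subseteq> U)"
    by blast
qed

lemma closed_graph_constant_on_image:
  assumes Y: "connected_space Y" "alexandrov_discrete Y" and e: "continuous_map Y X e"
    and f: "closed_graph X f" "f ` topspace X \<subseteq> topspace X"
    and "x \<in> topspace Y" "y \<in> topspace Y"
  shows "f (e x) = f (e y)"
  using Y(1) _ assms(6,7)
proof (rule connected_space_locally_constant)
  fix x assume x: "x \<in> topspace Y"
  with Y(2) obtain N where N: "openin Y N" "x \<in> N" "\<And>U. openin Y U \<Longrightarrow> x \<in> U \<Longrightarrow> N \<subseteq> U"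
    unfolding alexandrov_discrete_def by meson
  have eY: "e ` topspace Y \<subseteq> topspace X"
    using e by (rule continuous_map_image_subset_topspace)
  have "f (e y) = f (e x)" if y: "y \<in> N" for y
  proof (rule closed_graph_eq_if_in_every_nhd[OF f])
    show "e x \<in> topspace X" "e y \<in> topspace X"
      using x y openin_subset[OF N(1)] eY by auto
    fix U assume U: "openin X U" "e x \<in> U"
    have "N \<subseteq> {z \<in> topspace Y. e z \<in> U}"
      using N(3) openin_continuous_map_preimage[OF e U(1)] x U(2) by blast
    with y show "e y \<in> U" by blast
  qed
  with N(1,2) show "\<exists>U. openin Y U \<and> x \<in> U \<and> (\<forall>y\<in>U. f (e y) = f (e x))" by blast
qed

definition khalimsky_nhd :: "int \<Rightarrow> int set" where
  "khalimsky_nhd x = (if even x then {x - 1, x, x + 1} else {x})"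

lemma khalimsky_nhd_self: "x \<in> khalimsky_nhd x"
  by (simp add: khalimsky_nhd_def)

lemma openin_khalimsky: "openin khalimsky U \<longleftrightarrow> (\<forall>x\<in>U. khalimsky_nhd x \<subseteq> U)"
proof -
  let ?B = "{{2*m - 1, 2*m, 2*m + 1} | m. True} \<union> {{2*m + 1} | m :: int. True}"
  have nhd_in_B: "khalimsky_nhd x \<in> ?B" for x
  proof (cases "even x")
    case True
    then obtain m where "x = 2 * m" by blast
    with True show ?thesis by (auto simp: khalimsky_nhd_def)
  next
    case False
    then obtain m where "x = 2 * m + 1" by (blast elim: oddE)
    with False show ?thesis by (auto simp: khalimsky_nhd_def)
  qed
  show ?thesis
  proof
    assume "openin khalimsky U"
    then have "generate_topology_on ?B U"
      unfolding khalimsky_def openin_topology_generated_by_iff .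
    then show "\<forall>x\<in>U. khalimsky_nhd x \<subseteq> U"
    proof induct
      case (Basis s)
      then show ?case by (auto simp: khalimsky_nhd_def)
    qed blast+
  next
    assume "\<forall>x\<in>U. khalimsky_nhd x \<subseteq> U"
    then have "\<Union> (khalimsky_nhd ` U) = U" using khalimsky_nhd_self by blast
    moreover have "generate_topology_on ?B (\<Union> (khalimsky_nhd ` U))"
      using generate_topology_on.Basis[OF nhd_in_B] by (intro generate_topology_on.UN) blast
    ultimately show "openin khalimsky U"
      unfolding khalimsky_def openin_topology_generated_by_iff by simp
  qed
qed

lemma topspace_khalimsky [simp]: "topspace khalimsky = UNIV"
proof -
  have "openin khalimsky UNIV" by (simp add: openin_khalimsky)
  then have "UNIV \<subseteq> topspace khalimsky" by (rule openin_subset)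
  then show ?thesis by auto
qed

lemma openin_khalimsky_nhd: "openin khalimsky (khalimsky_nhd x)"
  unfolding openin_khalimsky by (auto simp: khalimsky_nhd_def)

lemma alexandrov_discrete_khalimsky: "alexandrov_discrete khalimsky"
  unfolding alexandrov_discrete_def
proof
  fix x
  show "\<exists>N. openin khalimsky N \<and> x \<in> N \<and> (\<forall>U. openin khalimsky U \<and> x \<in> U \<longrightarrow> N \<subseteq> U)"
  proof (intro exI conjI allI impI)
    show "openin khalimsky (khalimsky_nhd x)" "x \<in> khalimsky_nhd x"
      by (rule openin_khalimsky_nhd, rule khalimsky_nhd_self)
    fix U assume "openin khalimsky U \<and> x \<in> U"
    then show "khalimsky_nhd x \<subseteq> U" by (simp add: openin_khalimsky)
  qed
qed

lemma khalimsky_nhd_adjacent: "x + 1 \<in> khalimsky_nhd x \<or> x \<in> khalimsky_nhd (x + 1)"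
  by (cases "even x") (auto simp: khalimsky_nhd_def)

lemma closedin_khalimsky_even: "even z \<Longrightarrow> closedin khalimsky {z}"
  unfolding closedin_def openin_khalimsky by (auto simp: khalimsky_nhd_def)

lemma openin_khalimsky_subtopology_nhd:
  assumes "openin (subtopology khalimsky S) V" "e \<in> V"
  shows "khalimsky_nhd e \<inter> S \<subseteq> V"
proof -
  obtain T where "openin khalimsky T" "V = T \<inter> S"
    using assms(1) by (meson openin_subtopology)
  with assms(2) show ?thesis
    unfolding openin_khalimsky by blast
qed

lemma even_if_closedin_khalimsky_subtopology:
  assumes "closedin (subtopology khalimsky S) {z}" "w \<in> S" "\<bar>w - z\<bar> = 1"
  shows "even z"
proof (rule ccontr)
  assume "odd z"
  moreover have "w = z + 1 \<or> w = z - 1"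
    using assms(3) by arith
  ultimately have "z \<in> khalimsky_nhd w"
    by (auto simp: khalimsky_nhd_def)
  have "openin (subtopology khalimsky S) (S - {z})"
    using assms(1) by (simp add: closedin_def)
  moreover have "w \<in> S - {z}"
    using assms(2,3) by auto
  ultimately have "khalimsky_nhd w \<inter> S \<subseteq> S - {z}"
    by (rule openin_khalimsky_subtopology_nhd)
  moreover have "z \<in> S"
    using closedin_subset[OF assms(1)] by simp
  ultimately show False
    using \<open>z \<in> khalimsky_nhd w\<close> by blast
qed

lemma closedin_khalimsky_singleton_iff: "closedin khalimsky {z} \<longleftrightarrow> even z"
  using even_if_closedin_khalimsky_subtopology[of UNIV z "z + 1"] closedin_khalimsky_even by auto

lemma not_compact_space_khalimsky: "\<not> compact_space khalimsky"
proof
  assume "compact_space khalimsky"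
  then have "compactin khalimsky UNIV"
    by (simp add: compact_space_def)
  then have "\<exists>F. finite F \<and> F \<subseteq> range khalimsky_nhd \<and> UNIV \<subseteq> \<Union>F"
    by (rule compactinD) (use openin_khalimsky_nhd khalimsky_nhd_self in blast)+
  then obtain F where F: "finite F" "F \<subseteq> range khalimsky_nhd" "UNIV \<subseteq> \<Union>F"
    by blast
  have "finite (khalimsky_nhd x)" for x
    by (simp add: khalimsky_nhd_def)
  then have "finite (\<Union>F)" using F(1,2) by blast
  then show False using F(3) infinite_UNIV_int finite_subset by blast
qed

lemma khalimsky_interval_convex:
  assumes "khalimsky_interval S" "a \<in> S" "b \<in> S" "a \<le> c" "c \<le> b"
  shows "c \<in> S"
  using assms unfolding khalimsky_interval_def by auto

lemma khalimsky_interval_step_invariant: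
  assumes S: "khalimsky_interval S" and step: "\<And>x. x \<in> S \<Longrightarrow> x + 1 \<in> S \<Longrightarrow> g (x + 1) = g x"
    and "a \<in> S" "b \<in> S"
  shows "g a = g b"
proof -
  have upwards: "g b = g a" if "a \<in> S" "b \<in> S" "a \<le> b" for a b
  proof -
    have "b \<in> S \<longrightarrow> g b = g a"
      using \<open>a \<le> b\<close>
    proof (induction b rule: int_ge_induct)
      case base
      then show ?case by simp
    next
      case (step i)
      show ?case
      proof
        assume "i + 1 \<in> S"
        moreover have "i \<in> S"
          using khalimsky_interval_convex[OF S \<open>a \<in> S\<close> \<open>i + 1 \<in> S\<close>] step.hyps by simp
        ultimately show "g (i + 1) = g a"
          using step.IH assms(2) by simp
      qed
    qed
    with \<open>b \<in> S\<close> show ?thesis by blast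
  qed
  show ?thesis
    using upwards[of a b] upwards[of b a] assms(3,4) by (cases "a \<le> b") auto
qed

lemma connected_space_khalimsky_interval:
  assumes S: "khalimsky_interval S"
  shows "connected_space (subtopology khalimsky S)"
  unfolding connected_space_clopen_in
proof (intro allI impI)
  let ?X = "subtopology khalimsky S"
  fix T assume T: "openin ?X T \<and> closedin ?X T"
  then have T_open: "openin ?X T" and "openin ?X (S - T)"
    by (simp_all add: closedin_def)
  have "T \<subseteq> S"
    using openin_subset[OF T_open] by simp
  have same_side: "(u \<in> T) = (e \<in> T)" if "e \<in> S" "u \<in> S" "u \<in> khalimsky_nhd e" for e u
    using openin_khalimsky_subtopology_nhd[OF T_open, of e]
      openin_khalimsky_subtopology_nhd[OF \<open>openin ?X (S - T)\<close>, of e] that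
    by blast
  have step: "(x + 1 \<in> T) = (x \<in> T)" if "x \<in> S" "x + 1 \<in> S" for x
    using khalimsky_nhd_adjacent[of x] same_side[of x "x + 1"] same_side[of "x + 1" x] that
    by blast
  show "T = {} \<or> T = topspace ?X"
  proof (cases "T = {}")
    case False
    then obtain a where "a \<in> T" by blast
    have "x \<in> T" if "x \<in> S" for x
      using khalimsky_interval_step_invariant[of S "\<lambda>x. x \<in> T", OF S step] \<open>a \<in> T\<close> \<open>T \<subseteq> S\<close> that by blast
    with \<open>T \<subseteq> S\<close> show ?thesis by auto
  qed simp
qed

lemma connected_space_khalimsky: "connected_space khalimsky"
  using connected_space_khalimsky_interval[of UNIV] by (simp add: khalimsky_interval_def)

lemma khalimsky_interval_adjacent_point:
  assumes "khalimsky_interval S" "a \<in> S" "b \<in> S" "a \<noteq> b" "z \<in> S"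
  obtains w where "w \<in> S" "\<bar>w - z\<bar> = 1"
proof (cases "z < max a b")
  case True
  then have "z + 1 \<in> S"
    using khalimsky_interval_convex[OF assms(1) assms(5), of "max a b" "z + 1"] assms(2,3)
    by (auto simp: max_def)
  with that show ?thesis by fastforce
next
  case False
  then have "min a b < z"
    using assms(4) by (auto simp: min_def max_def)
  then have "z - 1 \<in> S"
    using khalimsky_interval_convex[OF assms(1) _ assms(5), of "min a b" "z - 1"] assms(2,3)
    by (auto simp: min_def)
  with that show ?thesis by fastforce
qed

lemma closed_graph_khalimsky_interval_iff:
  assumes S: "khalimsky_interval S" "a \<in> S" "b \<in> S" "a \<noteq> b" and f: "f ` S \<subseteq> S"
  shows "closed_graph (subtopology khalimsky S) f \<longleftrightarrow> (\<exists>l. 2 * l \<in> S \<and> (\<forall>x\<in>S. f x = 2 * l))"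
proof
  let ?X = "subtopology khalimsky S"
  assume cg: "closed_graph ?X f"
  have const: "f x = f a" if "x \<in> S" for x
    using closed_graph_constant_on_image[of ?X ?X id f x a] connected_space_khalimsky_interval[OF S(1)]
      alexandrov_discrete_subtopology[OF alexandrov_discrete_khalimsky] cg f that S(2)
    by simp
  have "f a \<in> S" using f S(2) by blast
  then obtain w where "w \<in> S" "\<bar>w - f a\<bar> = 1"
    using khalimsky_interval_adjacent_point[OF S] by blast
  moreover have "closedin ?X {f a}"
    using closedin_closed_graph_value[OF cg] f S(2) by simp
  ultimately have "even (f a)"
    using even_if_closedin_khalimsky_subtopology by blast
  then have "f a = 2 * (f a div 2)" by simp
  with const \<open>f a \<in> S\<close> show "\<exists>l. 2 * l \<in> S \<and> (\<forall>x\<in>S. f x = 2 * l)"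
    by metis
next
  assume "\<exists>l. 2 * l \<in> S \<and> (\<forall>x\<in>S. f x = 2 * l)"
  then obtain l where l: "2 * l \<in> S" "\<And>x. x \<in> S \<Longrightarrow> f x = 2 * l" by blast
  have "closedin (subtopology khalimsky S) {2 * l}"
    using closedin_khalimsky_even[of "2 * l"] l(1) by (simp add: closedin_subset_topspace)
  then show "closed_graph (subtopology khalimsky S) f"
    using l(2) by (rule closed_graph_const) simp
qed

lemma topspace_khalimsky_power: "topspace (khalimsky_power n) = PiE {..<n} (\<lambda>_. UNIV)"
  by (simp add: khalimsky_power_def)

lemma connected_space_khalimsky_power: "connected_space (khalimsky_power n)"
  unfolding khalimsky_power_def
  by (simp add: connected_space_product_topology connected_space_khalimsky)

lemma alexandrov_discrete_khalimsky_power: "alexandrov_discrete (khalimsky_power n)"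
  unfolding khalimsky_power_def
  by (simp add: alexandrov_discrete_product_topology alexandrov_discrete_khalimsky)

lemma not_compact_space_khalimsky_power:
  assumes "n \<ge> 1"
  shows "\<not> compact_space (khalimsky_power n)"
proof -
  have "khalimsky \<noteq> trivial_topology"
    using null_topspace_iff_trivial[of khalimsky] by simp
  moreover have "0 \<in> {..<n}" using assms by simp
  ultimately show ?thesis
    unfolding khalimsky_power_def compact_space_product_topology product_topology_trivial_iff
    using not_compact_space_khalimsky by blast
qed

lemma closedin_khalimsky_power_singleton_iff:
  "closedin (khalimsky_power n) {z} \<longleftrightarrow> (\<exists>l. z = restrict (\<lambda>i. 2 * l i) {..<n})"
proof
  assume closed: "closedin (khalimsky_power n) {z}"
  have z: "z \<in> extensional {..<n}"
    using closedin_subset[OF closed] by (simp add: topspace_khalimsky_power PiE_iff)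
  then have "\<forall>i\<in>{..<n}. closedin khalimsky {z i}"
    using closed closedin_product_topology_singleton[OF z, of "\<lambda>_. khalimsky"]
    unfolding khalimsky_power_def by simp
  then have even: "even (z i)" if "i < n" for i
    using that by (simp add: closedin_khalimsky_singleton_iff)
  have "z = restrict (\<lambda>i. 2 * (z i div 2)) {..<n}"
  proof
    fix i
    show "z i = restrict (\<lambda>i. 2 * (z i div 2)) {..<n} i"
      using even[of i] z by (cases "i < n") (auto simp: extensional_def)
  qed
  then show "\<exists>l. z = restrict (\<lambda>i. 2 * l i) {..<n}"
    by (rule exI[of _ "\<lambda>i. z i div 2"])
next
  assume "\<exists>l. z = restrict (\<lambda>i. 2 * l i) {..<n}"
  then show "closedin (khalimsky_power n) {z}"
    unfolding khalimsky_power_def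
    by (auto simp: closedin_product_topology_singleton closedin_khalimsky_singleton_iff)
qed

lemma closed_graph_khalimsky_power_iff:
  assumes f: "f ` topspace (khalimsky_power n) \<subseteq> topspace (khalimsky_power n)"
  shows "closed_graph (khalimsky_power n) f \<longleftrightarrow>
    (\<exists>l. \<forall>x\<in>topspace (khalimsky_power n). f x = restrict (\<lambda>i. 2 * l i) {..<n})"
proof
  let ?K = "khalimsky_power n" and ?o = "restrict (\<lambda>_. 0) {..<n}"
  assume cg: "closed_graph ?K f"
  have o: "?o \<in> topspace ?K"
    by (simp add: topspace_khalimsky_power)
  have "f x = f ?o" if "x \<in> topspace ?K" for x
    using closed_graph_constant_on_image[of ?K ?K id f x ?o] connected_space_khalimsky_power
      alexandrov_discrete_khalimsky_power cg f that o
    by simp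
  moreover obtain l where "f ?o = restrict (\<lambda>i. 2 * l i) {..<n}"
    using closedin_closed_graph_value[OF cg f o] closedin_khalimsky_power_singleton_iff by blast
  ultimately show "\<exists>l. \<forall>x\<in>topspace ?K. f x = restrict (\<lambda>i. 2 * l i) {..<n}"
    by auto
next
  assume "\<exists>l. \<forall>x\<in>topspace (khalimsky_power n). f x = restrict (\<lambda>i. 2 * l i) {..<n}"
  then obtain l where "\<And>x. x \<in> topspace (khalimsky_power n) \<Longrightarrow> f x = restrict (\<lambda>i. 2 * l i) {..<n}"
    by blast
  then show "closed_graph (khalimsky_power n) f"
    using closedin_khalimsky_power_singleton_iff by (intro closed_graph_const) auto
qed

lemma alexandroff_eq_Alexandroff_compactification:
  "alexandroff Y = Alexandroff_compactification Y"
proof -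
  have "((\<exists>V. openin Y V \<and> U = Some ` V) \<or>
      (None \<in> U \<and> U \<subseteq> insert None (Some ` topspace Y) \<and>
       compactin Y {y \<in> topspace Y. Some y \<notin> U} \<and> closedin Y {y \<in> topspace Y. Some y \<notin> U}))
    \<longleftrightarrow> Alexandroff_open Y U" for U
  proof -
    have "U = insert None (Some ` (topspace Y - C)) \<longleftrightarrow>
          None \<in> U \<and> U \<subseteq> insert None (Some ` topspace Y) \<and> C = {y \<in> topspace Y. Some y \<notin> U}"
      if "C \<subseteq> topspace Y" for C
      using that by auto
    then show ?thesis
      unfolding Alexandroff_open_iff by (metis (no_types, lifting) closedin_subset)
  qed
  then show ?thesis
    unfolding alexandroff_def Alexandroff_compactification_def by presburger
qed

lemma closed_graph_Alexandroff_compactification_constant: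
  assumes Y: "connected_space Y" "alexandrov_discrete Y" "\<not> compact_space Y"
    and f: "closed_graph (Alexandroff_compactification Y) f"
      "f ` topspace (Alexandroff_compactification Y) \<subseteq> topspace (Alexandroff_compactification Y)"
    and "y \<in> topspace Y" "p \<in> topspace (Alexandroff_compactification Y)"
  shows "f p = f (Some y)"
proof -
  let ?A = "Alexandroff_compactification Y" and ?c = "f (Some y)"
  have "?c \<in> topspace ?A"
    using f(2) \<open>y \<in> topspace Y\<close> by auto
  have "Some ` topspace Y \<subseteq> {q \<in> topspace ?A. f q = ?c}"
  proof
    fix q assume "q \<in> Some ` topspace Y"
    then obtain x where x: "x \<in> topspace Y" "q = Some x" by blast
    have "f (Some x) = ?c"
      using closed_graph_constant_on_image[OF Y(1,2) continuous_map_Some f x(1) \<open>y \<in> topspace Y\<close>] .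
    with x show "q \<in> {q \<in> topspace ?A. f q = ?c}" by simp
  qed
  then have "?A closure_of (Some ` topspace Y) \<subseteq> {q \<in> topspace ?A. f q = ?c}"
    by (rule closure_of_minimal) (rule closedin_closed_graph_fibre[OF f(1) \<open>?c \<in> topspace ?A\<close>])
  then show ?thesis
    using Alexandroff_compactification_dense[OF Y(3)] \<open>p \<in> topspace ?A\<close> by blast
qed

lemma closed_graph_alexandroff_khalimsky_power_iff:
  assumes n: "n \<ge> 1"
    and f: "f ` topspace (alexandroff (khalimsky_power n)) \<subseteq> topspace (alexandroff (khalimsky_power n))"
  shows "closed_graph (alexandroff (khalimsky_power n)) f \<longleftrightarrow>
    (\<exists>l. \<forall>x\<in>topspace (alexandroff (khalimsky_power n)). f x = Some (restrict (\<lambda>i. 2 * l i) {..<n})) \<or>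
    (\<forall>x\<in>topspace (alexandroff (khalimsky_power n)). f x = None)"
  unfolding alexandroff_eq_Alexandroff_compactification
proof
  let ?K = "khalimsky_power n" and ?o = "restrict (\<lambda>_. 0) {..<n}"
  let ?A = "Alexandroff_compactification ?K"
  assume cg: "closed_graph ?A f"
  have fA: "f ` topspace ?A \<subseteq> topspace ?A"
    using f unfolding alexandroff_eq_Alexandroff_compactification .
  have o: "?o \<in> topspace ?K"
    by (simp add: topspace_khalimsky_power)
  then have "Some ?o \<in> topspace ?A"
    by simp
  have const: "f p = f (Some ?o)" if "p \<in> topspace ?A" for p
    using closed_graph_Alexandroff_compactification_constant[OF connected_space_khalimsky_power
        alexandrov_discrete_khalimsky_power not_compact_space_khalimsky_power[OF n] cg fA o that] .
  have "closedin ?A {f (Some ?o)}"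
    using closedin_closed_graph_value[OF cg fA \<open>Some ?o \<in> topspace ?A\<close>] .
  show "(\<exists>l. \<forall>x\<in>topspace ?A. f x = Some (restrict (\<lambda>i. 2 * l i) {..<n})) \<or>
        (\<forall>x\<in>topspace ?A. f x = None)"
  proof (cases "f (Some ?o)")
    case None
    have "f x = None" if "x \<in> topspace ?A" for x
      using const[OF that] None by simp
    then show ?thesis by blast
  next
    case (Some z)
    with \<open>closedin ?A {f (Some ?o)}\<close> have "closedin ?K {z}"
      using closedin_Alexandroff_compactification_image_Some[of ?K "{z}"] by simp
    then obtain l where "z = restrict (\<lambda>i. 2 * l i) {..<n}"
      using closedin_khalimsky_power_singleton_iff by blast
    then have "f x = Some (restrict (\<lambda>i. 2 * l i) {..<n})" if "x \<in> topspace ?A" for x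
      using const[OF that] Some by simp
    then show ?thesis by blast
  qed
next
  let ?K = "khalimsky_power n"
  let ?A = "Alexandroff_compactification ?K"
  assume "(\<exists>l. \<forall>x\<in>topspace ?A. f x = Some (restrict (\<lambda>i. 2 * l i) {..<n})) \<or>
          (\<forall>x\<in>topspace ?A. f x = None)"
  then show "closed_graph ?A f"
  proof
    assume "\<exists>l. \<forall>x\<in>topspace ?A. f x = Some (restrict (\<lambda>i. 2 * l i) {..<n})"
    then obtain l where l: "\<And>x. x \<in> topspace ?A \<Longrightarrow> f x = Some (restrict (\<lambda>i. 2 * l i) {..<n})"
      by blast
    have "closedin ?K {restrict (\<lambda>i. 2 * l i) {..<n}}"
      using closedin_khalimsky_power_singleton_iff by blast
    then have "closedin ?A {Some (restrict (\<lambda>i. 2 * l i) {..<n})}"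
      using closedin_Alexandroff_compactification_image_Some[of ?K "{restrict (\<lambda>i. 2 * l i) {..<n}}"]
        closedin_subset by fastforce
    then show ?thesis
      using l by (intro closed_graph_const) auto
  next
    assume "\<forall>x\<in>topspace ?A. f x = None"
    moreover have "closedin ?A {None}"
      unfolding closedin_Alexandroff_compactification by auto
    ultimately show ?thesis
      by (intro closed_graph_const) auto
  qed
qed

theorem mainTheorem5:
  fixes n :: nat
  assumes "n \<ge> 1"
  shows
   "(\<forall>(S::int set) (f::int \<Rightarrow> int).
       khalimsky_interval S \<and> (\<exists>a b. a \<in> S \<and> b \<in> S \<and> a \<noteq> b) \<and> f ` S \<subseteq> S \<longrightarrow>
       (closed_graph (subtopology khalimsky S) f \<longleftrightarrow>
        (\<exists>l::int. 2 * l \<in> S \<and> (\<forall>x\<in>S. f x = 2 * l))))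
    \<and>
    (\<forall>f::(nat \<Rightarrow> int) \<Rightarrow> (nat \<Rightarrow> int).
       f ` topspace (khalimsky_power n) \<subseteq> topspace (khalimsky_power n) \<longrightarrow>
       (closed_graph (khalimsky_power n) f \<longleftrightarrow>
        (\<exists>l::nat \<Rightarrow> int. \<forall>x\<in>topspace (khalimsky_power n).
            f x = restrict (\<lambda>i. 2 * l i) {..<n})))
    \<and>
    (\<forall>f::(nat \<Rightarrow> int) option \<Rightarrow> (nat \<Rightarrow> int) option.
       f ` topspace (alexandroff (khalimsky_power n)) \<subseteq> topspace (alexandroff (khalimsky_power n)) \<longrightarrow>
       (closed_graph (alexandroff (khalimsky_power n)) f \<longleftrightarrow>
        ((\<exists>l::nat \<Rightarrow> int. \<forall>x\<in>topspace (alexandroff (khalimsky_power n)).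
            f x = Some (restrict (\<lambda>i. 2 * l i) {..<n})) \<or>
         (\<forall>x\<in>topspace (alexandroff (khalimsky_power n)). f x = None))))"
proof (intro conjI allI impI)
  fix S :: "int set" and f :: "int \<Rightarrow> int"
  assume "khalimsky_interval S \<and> (\<exists>a b. a \<in> S \<and> b \<in> S \<and> a \<noteq> b) \<and> f ` S \<subseteq> S"
  then obtain a b where "khalimsky_interval S" "a \<in> S" "b \<in> S" "a \<noteq> b" "f ` S \<subseteq> S"
    by blast
  then show "closed_graph (subtopology khalimsky S) f \<longleftrightarrow>
      (\<exists>l. 2 * l \<in> S \<and> (\<forall>x\<in>S. f x = 2 * l))"
    by (rule closed_graph_khalimsky_interval_iff)
next
  fix f :: "(nat \<Rightarrow> int) \<Rightarrow> (nat \<Rightarrow> int)"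
  assume "f ` topspace (khalimsky_power n) \<subseteq> topspace (khalimsky_power n)"
  then show "closed_graph (khalimsky_power n) f \<longleftrightarrow>
      (\<exists>l. \<forall>x\<in>topspace (khalimsky_power n). f x = restrict (\<lambda>i. 2 * l i) {..<n})"
    by (rule closed_graph_khalimsky_power_iff)
next
  fix f :: "(nat \<Rightarrow> int) option \<Rightarrow> (nat \<Rightarrow> int) option"
  assume "f ` topspace (alexandroff (khalimsky_power n)) \<subseteq> topspace (alexandroff (khalimsky_power n))"
  then show "closed_graph (alexandroff (khalimsky_power n)) f \<longleftrightarrow>
      (\<exists>l. \<forall>x\<in>topspace (alexandroff (khalimsky_power n)). f x = Some (restrict (\<lambda>i. 2 * l i) {..<n})) \<or>
      (\<forall>x\<in>topspace (alexandroff (khalimsky_power n)). f x = None)"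
    by (rule closed_graph_alexandroff_khalimsky_power_iff[OF assms])
qed

end
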